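(* In the setting described in the context, the traces of the SLD quantum information matrices of the two schemes are $$\mathrm{tr}\{H^{(i)}_\theta\}=\frac4d\sum_{i=1}^{d-1}\sum_{j=1}^n\Bigl(\frac{\partial f_j(\theta_i)}{\partial\theta_i}\Bigr)^2,\qquad \mathrm{tr}\{H^{(ii)}_\theta\}=\frac4d\sum_{i=1}^{d-1}\Bigl(\sum_{j=1}^n\frac{\partial f_j(\theta_i)}{\partial\theta_i}\Bigr)^2.$$
   Context: Let $t_1,\dots,t_{d-1}$ be $d\times d$ matrices with $t_k=t_k^\dagger$, $\mathrm{tr}\{t_k\}=0$, $\mathrm{tr}\{t_kt_l\}=\delta_{kl}$ and $t_kt_l=t_lt_k$; let $\{|w_k\rangle\}_{k=1}^d$ be a common orthonormal eigenbasis and $|\psi_{sep}\rangle=\frac1{\sqrt d}\sum_{k=1}^d|w_k\rangle$. Let $f_1,\dots,f_n:\mathbb{R}\to\mathbb{R}$ be differentiable with $f_j'>0$ and $0\le\sum_jf_j(\theta_k)\le\pi$ for all $j,k$ and all $\theta$ in the parameter range. For $\theta=(\theta_1,\dots,\theta_{d-1})$ define $U^j_\theta=\exp\bigl(i\sum_{k=1}^{d-1}f_j(\theta_k)t_k\bigr)$, $j=1,\dots,n$. Scheme (i): each $U^j_\theta$ acts on its own copy of $|\psi_{sep}\rangle$, giving the product output state $\bigotimes_{j=1}^nU^j_\theta|\psi_{sep}\rangle$; scheme (ii): all channels act in sequence on one copy, giving $U^n_\theta\cdots U^1_\theta|\psi_{sep}\rangle$. $H^{(i)}_\theta$, $H^{(ii)}_\theta$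 denote the SLD quantum information matrices of the respective output families; for a pure family $|\psi_\theta\rangle$, $(H_\theta)_{mm'}=4\,\mathrm{Re}[\langle\partial_m\psi|\partial_{m'}\psi\rangle-\langle\partial_m\psi|\psi\rangle\langle\psi|\partial_{m'}\psi\rangle]$. *)

theory Defs
  imports "HOL-Analysis.Analysis"
begin

fun mpow :: "complex^'d^'d \<Rightarrow> nat \<Rightarrow> complex^'d^'d" where
  "mpow A 0 = mat 1"
| "mpow A (Suc k) = A ** mpow A k"

definition mexp :: "complex^'d^'d \<Rightarrow> complex^'d^'d" where
  "mexp A = (\<chi> a b. (\<Sum>k. (mpow A k) $ a $ b / of_nat (fact k)))"

definition mtrace :: "complex^'d^'d \<Rightarrow> complex" where
  "mtrace A = (\<Sum>a\<in>UNIV. A $ a $ a)"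

definition adjoint_mat :: "complex^'d^'d \<Rightarrow> complex^'d^'d" where
  "adjoint_mat A = (\<chi> a b. cnj (A $ b $ a))"

definition vinner :: "complex^'d \<Rightarrow> complex^'d \<Rightarrow> complex" where
  "vinner u v = (\<Sum>a\<in>UNIV. cnj (u $ a) * v $ a)"

text \<open>A state is a function from a finite index set I to complex amplitudes;
  a family is parametrised by \<theta> :: nat \<Rightarrow> real (components \<theta> 0, ..., \<theta> (p-1)).\<close>

definition sinner :: "'x set \<Rightarrow> ('x \<Rightarrow> complex) \<Rightarrow> ('x \<Rightarrow> complex) \<Rightarrow> complex" where
  "sinner I u v = (\<Sum>x\<in>I. cnj (u x) * v x)"

definition pd_state :: "((nat \<Rightarrow> real) \<Rightarrow> 'x \<Rightarrow> complex) \<Rightarrow> (nat \<Rightarrow> real) \<Rightarrow> nat \<Rightarrow> 'x \<Rightarrow> complex" where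
  "pd_state \<Psi> \<theta> m = (\<lambda>x. vector_derivative (\<lambda>s. \<Psi> (\<theta>(m := s)) x) (at (\<theta> m)))"

definition sld_qim :: "'x set \<Rightarrow> ((nat \<Rightarrow> real) \<Rightarrow> 'x \<Rightarrow> complex) \<Rightarrow> (nat \<Rightarrow> real) \<Rightarrow> nat \<Rightarrow> nat \<Rightarrow> real" where
  "sld_qim I \<Psi> \<theta> m m' =
     4 * Re (sinner I (pd_state \<Psi> \<theta> m) (pd_state \<Psi> \<theta> m')
             - sinner I (pd_state \<Psi> \<theta> m) (\<Psi> \<theta>) * sinner I (\<Psi> \<theta>) (pd_state \<Psi> \<theta> m'))"

definition sld_qim_trace :: "nat \<Rightarrow> 'x set \<Rightarrow> ((nat \<Rightarrow> real) \<Rightarrow> 'x \<Rightarrow> complex) \<Rightarrow> (nat \<Rightarrow> real) \<Rightarrow> real" where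
  "sld_qim_trace p I \<Psi> \<theta> = (\<Sum>m<p. sld_qim I \<Psi> \<theta> m m)"

definition chanU :: "(nat \<Rightarrow> complex^'d^'d) \<Rightarrow> (nat \<Rightarrow> real \<Rightarrow> real) \<Rightarrow> nat \<Rightarrow> (nat \<Rightarrow> real) \<Rightarrow> complex^'d^'d" where
  "chanU t f j \<theta> = mexp (\<chi> a b. \<i> * (\<Sum>k<CARD('d) - 1. complex_of_real (f j (\<theta> k)) * t k $ a $ b))"

definition psi_sep :: "('d \<Rightarrow> complex^'d) \<Rightarrow> complex^'d" where
  "psi_sep w = (\<Sum>a\<in>UNIV. complex_of_real (1 / sqrt (real CARD('d))) *s w a)"

text \<open>Scheme (i): tensor product of the n outputs; basis of the tensor product
  indexed by tuples g in the extensional function space from {..<n} to UNIV.\<close>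
definition prod_index :: "nat \<Rightarrow> (nat \<Rightarrow> 'd) set" where
  "prod_index n = ({..<n} \<rightarrow>\<^sub>E (UNIV :: 'd set))"

definition scheme_i :: "(nat \<Rightarrow> complex^'d^'d) \<Rightarrow> (nat \<Rightarrow> real \<Rightarrow> real) \<Rightarrow> nat \<Rightarrow> ('d \<Rightarrow> complex^'d)
    \<Rightarrow> (nat \<Rightarrow> real) \<Rightarrow> (nat \<Rightarrow> 'd) \<Rightarrow> complex" where
  "scheme_i t f n w \<theta> = (\<lambda>g. \<Prod>j<n. (chanU t f j \<theta> *v psi_sep w) $ g j)"

fun seq_state :: "(nat \<Rightarrow> complex^'d^'d) \<Rightarrow> (nat \<Rightarrow> real \<Rightarrow> real) \<Rightarrow> nat \<Rightarrow> ('d \<Rightarrow> complex^'d)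
    \<Rightarrow> (nat \<Rightarrow> real) \<Rightarrow> complex^'d" where
  "seq_state t f 0 w \<theta> = psi_sep w"
| "seq_state t f (Suc j) w \<theta> = chanU t f j \<theta> *v seq_state t f j w \<theta>"

definition scheme_ii :: "(nat \<Rightarrow> complex^'d^'d) \<Rightarrow> (nat \<Rightarrow> real \<Rightarrow> real) \<Rightarrow> nat \<Rightarrow> ('d \<Rightarrow> complex^'d)
    \<Rightarrow> (nat \<Rightarrow> real) \<Rightarrow> 'd \<Rightarrow> complex" where
  "scheme_ii t f n w \<theta> = (\<lambda>a. seq_state t f n w \<theta> $ a)"

end

theory Submission
  imports Defs
begin

(*
  All t_k are diagonal in the basis w, with real eigenvalues lambda_k(a) satisfying
  sum_a lambda_k(a) = 0 (tracelessness) and sum_a lambda_k(a)^2 = 1 (normalisation).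
  Hence channel j multiplies w_a by the phase exp(i phi_j(theta,a)), where
  phi_j(theta,a) = sum_k f_j(theta_k) lambda_k(a), and every single-copy output is of the form
  d^(-1/2) sum_a exp(i phi(theta,a)) w_a, with phi = sum_j phi_j for the sequential scheme.
  Differentiating in theta_m multiplies the a-th amplitude by i F'(theta_m) lambda_m(a): the
  derivative is orthogonal to the state and has squared norm F'(theta_m)^2 / d. For a tensor
  product of normalised states whose derivatives are orthogonal to them the diagonal entries of
  the quantum information matrix add up, so scheme (i) gives a sum of squares where scheme (ii)
  gives the square of the sum.
*)

lemma mpow_eigenvector:
  assumes "(A::complex^'d^'d) *v v = c *s v"
  shows "mpow A k *v v = c ^ k *s v"
  by (induction k)
    (simp_all add: assms matrix_vector_mul_assoc[symmetric] vector_scalar_commute mult.commute)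

lemma norm_mpow_entry_le:
  fixes A :: "complex^'d^'d"
  defines "N \<equiv> (\<Sum>a\<in>UNIV. \<Sum>b\<in>UNIV. norm (A $ a $ b))"
  shows "norm (mpow A k $ a $ b) \<le> N ^ k"
proof (induction k arbitrary: a b)
  case 0
  then show ?case by (simp add: mat_def)
next
  case (Suc k)
  have row_le: "(\<Sum>c\<in>UNIV. norm (A $ a $ c)) \<le> N"
    unfolding N_def by (rule member_le_sum) (auto intro: sum_nonneg)
  have "norm (mpow A (Suc k) $ a $ b) \<le> (\<Sum>c\<in>UNIV. norm (A $ a $ c) * N ^ k)"
    unfolding mpow.simps matrix_matrix_mult_def vec_lambda_beta
    by (rule order_trans[OF norm_sum sum_mono]) (auto simp: norm_mult intro: mult_left_mono Suc)
  also have "\<dots> \<le> N * N ^ k"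
    unfolding sum_distrib_right[symmetric]
    by (rule mult_right_mono[OF row_le]) (simp add: N_def sum_nonneg)
  finally show ?case by simp
qed

lemma summable_mpow_entry_div_fact:
  fixes A :: "complex^'d^'d"
  shows "summable (\<lambda>k. mpow A k $ a $ b / of_nat (fact k))"
proof (rule summable_comparison_test[OF _ summable_exp])
  show "\<exists>M. \<forall>k\<ge>M. norm (mpow A k $ a $ b / of_nat (fact k))
      \<le> inverse (fact k) * (\<Sum>a\<in>UNIV. \<Sum>b\<in>UNIV. norm (A $ a $ b)) ^ k"
    using norm_mpow_entry_le[of A] by (auto simp: norm_divide divide_simps mult.commute)
qed

lemma mexp_eigenvector:
  assumes "(A::complex^'d^'d) *v v = c *s v"
  shows "mexp A *v v = exp c *s v"
proof -
  have exp_series: "(\<lambda>k. c ^ k / of_nat (fact k)) sums exp c"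
    using exp_converges[of c] by (simp add: scaleR_conv_of_real divide_inverse mult.commute)
  have "(mexp A *v v) $ a = exp c * v $ a" for a
  proof -
    have "(mexp A *v v) $ a = (\<Sum>b\<in>UNIV. \<Sum>k. mpow A k $ a $ b / of_nat (fact k) * v $ b)"
      unfolding mexp_def matrix_vector_mult_def vec_lambda_beta
      by (intro sum.cong refl suminf_mult2 summable_mpow_entry_div_fact)
    also have "\<dots> = (\<Sum>k. \<Sum>b\<in>UNIV. mpow A k $ a $ b / of_nat (fact k) * v $ b)"
      by (rule suminf_sum[symmetric]) (intro summable_mult2 summable_mpow_entry_div_fact)
    also have "\<dots> = (\<Sum>k. (mpow A k *v v) $ a / of_nat (fact k))"
      by (simp add: matrix_vector_mult_def sum_divide_distrib)
    also have "\<dots> = (\<Sum>k. c ^ k / of_nat (fact k) * v $ a)"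
      by (simp add: mpow_eigenvector[OF assms])
    also have "\<dots> = exp c * v $ a"
      by (rule sums_unique[symmetric]) (rule sums_mult2[OF exp_series])
    finally show ?thesis .
  qed
  then show ?thesis by (simp add: vec_eq_iff)
qed

lemma vinner_smult_right: "vinner u (c *s v) = c * vinner u v"
  by (simp add: vinner_def sum_distrib_left mult_ac)

lemma cnj_vinner: "cnj (vinner u v) = vinner v u"
  by (simp add: vinner_def mult.commute)

lemma vinner_adjoint_mat: "vinner (A *v u) v = vinner u (adjoint_mat A *v v)"
proof -
  have "vinner (A *v u) v = (\<Sum>x\<in>UNIV. \<Sum>y\<in>UNIV. cnj (A $ x $ y) * cnj (u $ y) * v $ x)"
    by (simp add: vinner_def matrix_vector_mult_def sum_distrib_right)
  also have "\<dots> = (\<Sum>y\<in>UNIV. \<Sum>x\<in>UNIV. cnj (A $ x $ y) * cnj (u $ y) * v $ x)"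
    by (rule sum.swap)
  also have "\<dots> = vinner u (adjoint_mat A *v v)"
    by (simp add: vinner_def matrix_vector_mult_def adjoint_mat_def sum_distrib_left mult_ac)
  finally show ?thesis .
qed

lemma vinner_smult_left: "vinner (c *s u) v = cnj c * vinner u v"
  by (simp add: vinner_def sum_distrib_left mult_ac)

lemma vinner_sum_left: "vinner (\<Sum>a\<in>A. u a) v = (\<Sum>a\<in>A. vinner (u a) v)"
  unfolding vinner_def sum_component cnj_sum sum_distrib_right by (rule sum.swap)

lemma vinner_sum_right: "vinner u (\<Sum>a\<in>A. v a) = (\<Sum>a\<in>A. vinner u (v a))"
  unfolding vinner_def sum_component sum_distrib_left by (rule sum.swap)

lemma vinner_orthonormal_expansion:
  fixes w :: "'d \<Rightarrow> complex^'d"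
  assumes onb: "\<And>a b. vinner (w a) (w b) = (if a = b then 1 else 0)"
  shows "vinner (\<Sum>a\<in>UNIV. c a *s w a) (\<Sum>b\<in>UNIV. e b *s w b) = (\<Sum>a\<in>UNIV. cnj (c a) * e a)"
  by (simp add: vinner_sum_left vinner_sum_right vinner_smult_left vinner_smult_right onb
      if_distrib mult.commute cong: if_cong)

lemma mtrace_orthonormal_basis:
  fixes w :: "'d \<Rightarrow> complex^'d" and A :: "complex^'d^'d"
  assumes onb: "\<And>a b. vinner (w a) (w b) = (if a = b then 1 else 0)"
  shows "mtrace A = (\<Sum>a\<in>UNIV. vinner (w a) (A *v w a))"
proof -
  define W :: "complex^'d^'d" where "W = (\<chi> i a. w a $ i)"
  have "adjoint_mat W ** W = mat 1"
    using onb by (simp add: vec_eq_iff matrix_matrix_mult_def adjoint_mat_def W_def vinner_def mat_def)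
  then have "W ** adjoint_mat W = mat 1"
    by (simp add: matrix_left_right_inverse)
  then have completeness: "(\<Sum>a\<in>UNIV. cnj (w a $ i) * w a $ j) = (if i = j then 1 else 0)" for i j
    by (auto simp: vec_eq_iff matrix_matrix_mult_def adjoint_mat_def W_def mat_def mult.commute)
  have "(\<Sum>a\<in>UNIV. vinner (w a) (A *v w a))
      = (\<Sum>a\<in>UNIV. \<Sum>i\<in>UNIV. \<Sum>j\<in>UNIV. A $ i $ j * (cnj (w a $ i) * w a $ j))"
    by (simp add: vinner_def matrix_vector_mult_def sum_distrib_left mult_ac)
  also have "\<dots> = (\<Sum>i\<in>UNIV. \<Sum>j\<in>UNIV. \<Sum>a\<in>UNIV. A $ i $ j * (cnj (w a $ i) * w a $ j))"
    by (subst sum.swap, rule sum.cong[OF refl], rule sum.swap)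
  also have "\<dots> = mtrace A"
    by (simp add: sum_distrib_left[symmetric] completeness mtrace_def if_distrib cong: if_cong)
  finally show ?thesis ..
qed

lemma sinner_vec: "sinner UNIV (\<lambda>x. u $ x) (\<lambda>x. v $ x) = vinner u v"
  by (simp add: sinner_def vinner_def)

lemma sinner_sum_left: "sinner I (\<lambda>x. \<Sum>j\<in>J. u j x) v = (\<Sum>j\<in>J. sinner I (u j) v)"
  unfolding sinner_def cnj_sum sum_distrib_right by (rule sum.swap)

lemma sinner_sum_right: "sinner I u (\<lambda>x. \<Sum>j\<in>J. v j x) = (\<Sum>j\<in>J. sinner I u (v j))"
  unfolding sinner_def sum_distrib_left by (rule sum.swap)

lemma sinner_prod_index_prod:
  "sinner (prod_index n) (\<lambda>g. \<Prod>l<n. u l $ g l) (\<lambda>g. \<Prod>l<n. v l $ g l)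
     = (\<Prod>l<n. vinner (u l) (v l))"
  unfolding sinner_def prod_index_def vinner_def cnj_prod prod.distrib[symmetric]
  by (rule prod_sum_PiE[symmetric]) auto

lemma has_vector_derivative_prod:
  fixes h :: "'i \<Rightarrow> real \<Rightarrow> complex"
  assumes "finite I" and "\<And>j. j \<in> I \<Longrightarrow> (h j has_vector_derivative h' j) (at x)"
  shows "((\<lambda>s. \<Prod>j\<in>I. h j s) has_vector_derivative
           (\<Sum>j\<in>I. \<Prod>l\<in>I. if l = j then h' l else h l x)) (at x)"
proof -
  have "(\<Prod>l\<in>I. if l = j then h' l else h l x) = h' j * (\<Prod>l\<in>I - {j}. h l x)" if "j \<in> I" for j
  proof -
    have "(\<Prod>l\<in>I - {j}. if l = j then h' l else h l x) = (\<Prod>l\<in>I - {j}. h l x)"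
      by (rule prod.cong) auto
    with that show ?thesis
      by (simp add: prod.remove[OF assms(1)])
  qed
  with assms(2) show ?thesis
    unfolding has_vector_derivative_def
    by (intro has_derivative_eq_rhs[OF has_derivative_prod])
      (auto simp: has_vector_derivative_def fun_eq_iff scaleR_sum_right scaleR_conv_of_real
        sum_distrib_left mult_ac intro!: sum.cong)
qed

lemma sld_qim_vec_orthogonal_derivative:
  fixes V :: "(nat \<Rightarrow> real) \<Rightarrow> complex^'d"
  assumes "\<And>x. ((\<lambda>s. V (\<theta>(m := s)) $ x) has_vector_derivative X $ x) (at (\<theta> m))"
    and "vinner X (V \<theta>) = 0"
  shows "sld_qim UNIV (\<lambda>\<theta> x. V \<theta> $ x) \<theta> m m = 4 * Re (vinner X X)"
proof -
  have "pd_state (\<lambda>\<theta> x. V \<theta> $ x) \<theta> m = (\<lambda>x. X $ x)"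
    using assms(1) by (simp add: pd_state_def vector_derivative_at fun_eq_iff)
  with assms(2) show ?thesis
    by (simp add: sld_qim_def sinner_vec)
qed

lemma sld_qim_product_orthogonal_derivatives:
  fixes V :: "nat \<Rightarrow> (nat \<Rightarrow> real) \<Rightarrow> complex^'d" and X :: "nat \<Rightarrow> complex^'d"
  assumes deriv: "\<And>l x. l < n \<Longrightarrow>
      ((\<lambda>s. V l (\<theta>(m := s)) $ x) has_vector_derivative X l $ x) (at (\<theta> m))"
    and normalized: "\<And>l. l < n \<Longrightarrow> vinner (V l \<theta>) (V l \<theta>) = 1"
    and orthogonal: "\<And>l. l < n \<Longrightarrow> vinner (X l) (V l \<theta>) = 0"
  shows "sld_qim (prod_index n) (\<lambda>\<theta> g. \<Prod>l<n. V l \<theta> $ g l) \<theta> m m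
           = 4 * (\<Sum>l<n. Re (vinner (X l) (X l)))"
proof -
  (* The product rule replaces one factor at a time by its derivative: term j has factors E j. *)
  define E where "E j l = (if l = j then X l else V l \<theta>)" for j l
  have pd: "pd_state (\<lambda>\<theta> g. \<Prod>l<n. V l \<theta> $ g l) \<theta> m = (\<lambda>g. \<Sum>j<n. \<Prod>l<n. E j l $ g l)"
  proof
    fix g
    have "E j l $ g l = (if l = j then X l $ g l else V l (\<theta>(m := \<theta> m)) $ g l)" for j l
      by (simp add: E_def)
    then have "((\<lambda>s. \<Prod>l<n. V l (\<theta>(m := s)) $ g l) has_vector_derivative
        (\<Sum>j<n. \<Prod>l<n. E j l $ g l)) (at (\<theta> m))"
      by (simp only:) (rule has_vector_derivative_prod, simp_all add: deriv)
    then show "pd_state (\<lambda>\<theta> g. \<Prod>l<n. V l \<theta> $ g l) \<theta> m g = (\<Sum>j<n. \<Prod>l<n. E j l $ g l)"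
      by (simp add: pd_state_def vector_derivative_at)
  qed
  have E_inner: "(\<Prod>l<n. vinner (E j l) (E j' l)) = (if j = j' then vinner (X j) (X j) else 0)"
    if "j < n" "j' < n" for j j'
  proof (cases "j = j'")
    case True
    have "(\<Prod>l<n. vinner (E j l) (E j l))
        = vinner (E j j) (E j j) * (\<Prod>l\<in>{..<n} - {j}. vinner (E j l) (E j l))"
      by (rule prod.remove) (use that in auto)
    moreover have "(\<Prod>l\<in>{..<n} - {j}. vinner (E j l) (E j l)) = 1"
      by (rule prod.neutral) (auto simp: E_def normalized)
    ultimately show ?thesis
      using True by (simp add: E_def)
  next
    case False
    then have "vinner (E j j) (E j' j) = 0"
      by (simp add: E_def orthogonal that)
    then show ?thesis
      using False that by (auto intro: prod_zero)
  qed
  have E_orth: "(\<Prod>l<n. vinner (E j l) (V l \<theta>)) = 0" if "j < n" for j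
    using that by (auto simp: E_def orthogonal intro!: prod_zero bexI[of _ j])
  show ?thesis
    unfolding sld_qim_def pd
    by (simp add: sinner_sum_left sinner_sum_right sinner_prod_index_prod E_inner E_orth
        if_distrib Re_sum cong: if_cong)
qed

locale common_eigenbasis =
  fixes t :: "nat \<Rightarrow> complex^'d^'d" and w :: "'d \<Rightarrow> complex^'d"
  assumes hermitian: "\<And>k. k < CARD('d) - 1 \<Longrightarrow> adjoint_mat (t k) = t k"
    and traceless: "\<And>k. k < CARD('d) - 1 \<Longrightarrow> mtrace (t k) = 0"
    and trace_square: "\<And>k. k < CARD('d) - 1 \<Longrightarrow> mtrace (t k ** t k) = 1"
    and orthonormal: "\<And>a b. vinner (w a) (w b) = (if a = b then 1 else 0)"
    and eigenvector: "\<And>k a. k < CARD('d) - 1 \<Longrightarrow> \<exists>c. t k *v w a = c *s w a"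
begin

definition eigval :: "nat \<Rightarrow> 'd \<Rightarrow> real" where
  "eigval k a = Re (vinner (w a) (t k *v w a))"

lemma t_eigenvector:
  assumes k: "k < CARD('d) - 1"
  shows "t k *v w a = of_real (eigval k a) *s w a"
proof -
  obtain c where c: "t k *v w a = c *s w a"
    using eigenvector[OF k] by blast
  have "vinner (w a) (t k *v w a) = c"
    by (simp add: c vinner_smult_right orthonormal)
  moreover have "cnj (vinner (w a) (t k *v w a)) = vinner (w a) (t k *v w a)"
    by (simp add: cnj_vinner vinner_adjoint_mat hermitian[OF k])
  ultimately have "c = of_real (eigval k a)"
    by (simp add: eigval_def complex_eq_iff)
  with c show ?thesis
    by simp
qed

lemma sum_eigval:
  assumes k: "k < CARD('d) - 1"
  shows "(\<Sum>a\<in>UNIV. eigval k a) = 0"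
proof -
  have "of_real (\<Sum>a\<in>UNIV. eigval k a) = mtrace (t k)"
    by (simp add: mtrace_orthonormal_basis[OF orthonormal] t_eigenvector[OF k]
        vinner_smult_right orthonormal)
  with traceless[OF k] show ?thesis
    by (metis of_real_eq_0_iff)
qed

lemma sum_eigval_squared:
  assumes k: "k < CARD('d) - 1"
  shows "(\<Sum>a\<in>UNIV. (eigval k a)\<^sup>2) = 1"
proof -
  have "of_real (\<Sum>a\<in>UNIV. (eigval k a)\<^sup>2) = mtrace (t k ** t k)"
    by (simp add: mtrace_orthonormal_basis[OF orthonormal] matrix_vector_mul_assoc[symmetric]
        t_eigenvector[OF k] vector_scalar_commute vinner_smult_right orthonormal power2_eq_square)
  with trace_square[OF k] show ?thesis
    by (metis of_real_eq_1_iff)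
qed

definition phase :: "(real \<Rightarrow> real) \<Rightarrow> (nat \<Rightarrow> real) \<Rightarrow> 'd \<Rightarrow> real" where
  "phase F \<theta> a = (\<Sum>k<CARD('d) - 1. F (\<theta> k) * eigval k a)"

(* d^(-1/2) sum_a z_a exp(i phi_F(theta,a)) w_a: for z = 1 the output states, for
   z_a = i F'(theta_m) lambda_m(a) their derivatives in theta_m. *)
definition phase_vec :: "(real \<Rightarrow> real) \<Rightarrow> (nat \<Rightarrow> real) \<Rightarrow> ('d \<Rightarrow> complex) \<Rightarrow> complex^'d" where
  "phase_vec F \<theta> z =
     (\<Sum>a\<in>UNIV. (of_real (1 / sqrt (real CARD('d))) * z a * cis (phase F \<theta> a)) *s w a)"

abbreviation phase_state :: "(real \<Rightarrow> real) \<Rightarrow> (nat \<Rightarrow> real) \<Rightarrow> complex^'d" where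
  "phase_state F \<theta> \<equiv> phase_vec F \<theta> (\<lambda>_. 1)"

lemma chanU_eigenvector: "chanU t f j \<theta> *v w a = cis (phase (f j) \<theta> a) *s w a"
  unfolding chanU_def cis_conv_exp
proof (rule mexp_eigenvector)
  let ?G = "\<chi> a b. \<i> * (\<Sum>k<CARD('d) - 1. complex_of_real (f j (\<theta> k)) * t k $ a $ b)"
  have "(?G *v w a) $ x = \<i> * (\<Sum>k<CARD('d) - 1. of_real (f j (\<theta> k)) * (t k *v w a) $ x)" for x
    by (simp add: matrix_vector_mult_def sum_distrib_left sum_distrib_right mult_ac
        sum.swap[of _ UNIV])
  also have "\<dots> x = \<i> * of_real (phase (f j) \<theta> a) * w a $ x" for x
    by (simp add: t_eigenvector phase_def sum_distrib_left sum_distrib_right mult_ac)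
  finally show "?G *v w a = (\<i> * of_real (phase (f j) \<theta> a)) *s w a"
    by (simp add: vec_eq_iff)
qed

lemma chanU_phase_vec: "chanU t f j \<theta> *v phase_vec G \<theta> z = phase_vec (\<lambda>x. G x + f j x) \<theta> z"
proof -
  have "phase (\<lambda>x. G x + f j x) \<theta> a = phase G \<theta> a + phase (f j) \<theta> a" for a
    by (simp add: phase_def distrib_right sum.distrib)
  then show ?thesis
    by (simp add: phase_vec_def vec.sum vector_scalar_commute chanU_eigenvector cis_mult mult_ac)
qed

lemma psi_sep_eq_phase_state: "psi_sep w = phase_state (\<lambda>_. 0) \<theta>"
  by (simp add: psi_sep_def phase_vec_def phase_def)

lemma chanU_psi_sep: "chanU t f j \<theta> *v psi_sep w = phase_state (f j) \<theta>"
  unfolding psi_sep_eq_phase_state[of \<theta>] chanU_phase_vec by simp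

lemma scheme_i_eq: "scheme_i t f n w = (\<lambda>\<theta> g. \<Prod>j<n. phase_state (f j) \<theta> $ g j)"
  by (simp add: scheme_i_def fun_eq_iff chanU_psi_sep)

lemma scheme_ii_eq: "scheme_ii t f n w = (\<lambda>\<theta> a. phase_state (\<lambda>x. \<Sum>j<n. f j x) \<theta> $ a)"
proof -
  have "seq_state t f n w \<theta> = phase_state (\<lambda>x. \<Sum>j<n. f j x) \<theta>" for \<theta>
    by (induction n) (simp_all add: psi_sep_eq_phase_state[of \<theta>] chanU_phase_vec)
  then show ?thesis
    by (simp add: scheme_ii_def fun_eq_iff)
qed

lemma vinner_phase_vec:
  "vinner (phase_vec F \<theta> z) (phase_vec F \<theta> y) = (\<Sum>a\<in>UNIV. cnj (z a) * y a) / of_nat CARD('d)"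
proof -
  have "cnj (of_real (1 / sqrt (real CARD('d))) * z a * cis r)
          * (of_real (1 / sqrt (real CARD('d))) * y a * cis r)
      = cnj (z a) * y a / of_nat CARD('d)" for a r
  proof -
    have "cnj (cis r) * cis r = 1"
      by (simp add: cis_cnj cis_mult)
    moreover have "of_real (1 / sqrt (real CARD('d))) * of_real (1 / sqrt (real CARD('d)))
        = (1 / of_nat CARD('d) :: complex)"
      by (simp flip: of_real_mult)
    ultimately show ?thesis
      by (simp add: field_simps)
  qed
  then show ?thesis
    by (simp add: phase_vec_def vinner_orthonormal_expansion[OF orthonormal] sum_divide_distrib)
qed

lemma vinner_phase_state: "vinner (phase_state F \<theta>) (phase_state F \<theta>) = 1"
  by (simp add: vinner_phase_vec)

lemma has_real_derivative_phase:
  assumes m: "m < CARD('d) - 1" and F: "(F has_real_derivative D) (at (\<theta> m))"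
  shows "((\<lambda>s. phase F (\<theta>(m := s)) a) has_real_derivative D * eigval m a) (at (\<theta> m))"
proof -
  have "phase F (\<theta>(m := s)) a
      = F s * eigval m a + (\<Sum>k\<in>{..<CARD('d) - 1} - {m}. F (\<theta> k) * eigval k a)" for s
    using m by (simp add: phase_def sum.remove[of _ m])
  then show ?thesis
    by (auto intro!: derivative_eq_intros F)
qed

lemma has_vector_derivative_phase_state:
  assumes m: "m < CARD('d) - 1" and F: "(F has_real_derivative D) (at (\<theta> m))"
  shows "((\<lambda>s. phase_state F (\<theta>(m := s)) $ x) has_vector_derivative
           phase_vec F \<theta> (\<lambda>a. \<i> * of_real (D * eigval m a)) $ x) (at (\<theta> m))"
proof -
  have cis_phase: "((\<lambda>s. cis (phase F (\<theta>(m := s)) a)) has_vector_derivative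
      \<i> * of_real (D * eigval m a) * cis (phase F \<theta> a)) (at (\<theta> m))" for a
    unfolding has_vector_derivative_def
    by (rule has_derivative_eq_rhs[OF has_derivative_cis[OF has_real_derivative_phase[where \<theta>=\<theta>, OF m F,
          unfolded has_field_derivative_def]]])
      (simp add: fun_eq_iff scaleR_conv_of_real mult_ac)
  show ?thesis
    unfolding phase_vec_def sum_component vector_smult_component
    by (auto intro!: derivative_eq_intros cis_phase simp: mult_ac)
qed

lemma phase_derivative_orthogonal:
  assumes m: "m < CARD('d) - 1"
  shows "vinner (phase_vec F \<theta> (\<lambda>a. \<i> * of_real (D * eigval m a))) (phase_state F \<theta>) = 0"
proof -
  have "(\<Sum>a\<in>UNIV. cnj (\<i> * of_real (D * eigval m a)))
      = - \<i> * of_real (D * (\<Sum>a\<in>UNIV. eigval m a))"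
    by (simp add: sum_distrib_left sum_negf)
  then show ?thesis
    by (simp add: vinner_phase_vec sum_eigval[OF m])
qed

lemma vinner_phase_derivative:
  assumes m: "m < CARD('d) - 1"
  shows "vinner (phase_vec F \<theta> (\<lambda>a. \<i> * of_real (D * eigval m a)))
                (phase_vec F \<theta> (\<lambda>a. \<i> * of_real (D * eigval m a)))
           = of_real (D\<^sup>2 / real CARD('d))"
proof -
  have "(\<Sum>a\<in>UNIV. cnj (\<i> * of_real (D * eigval m a)) * (\<i> * of_real (D * eigval m a)))
      = of_real (D\<^sup>2 * (\<Sum>a\<in>UNIV. (eigval m a)\<^sup>2))"
    by (simp add: sum_distrib_left power2_eq_square mult_ac)
  then show ?thesis
    by (simp add: vinner_phase_vec sum_eigval_squared[OF m])
qed

lemma sld_qim_phase_state: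
  assumes m: "m < CARD('d) - 1" and F: "(F has_real_derivative D) (at (\<theta> m))"
  shows "sld_qim UNIV (\<lambda>\<theta> a. phase_state F \<theta> $ a) \<theta> m m = 4 / real CARD('d) * D\<^sup>2"
proof -
  have "sld_qim UNIV (\<lambda>\<theta> a. phase_state F \<theta> $ a) \<theta> m m
      = 4 * Re (vinner (phase_vec F \<theta> (\<lambda>a. \<i> * of_real (D * eigval m a)))
                       (phase_vec F \<theta> (\<lambda>a. \<i> * of_real (D * eigval m a))))"
    by (intro sld_qim_vec_orthogonal_derivative has_vector_derivative_phase_state[where \<theta>=\<theta>]
        phase_derivative_orthogonal m F)
  then show ?thesis
    by (simp only: vinner_phase_derivative[OF m] Re_complex_of_real) simp
qed

lemma sld_qim_product_phase_states:
  assumes m: "m < CARD('d) - 1"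
    and f: "\<And>j. j < n \<Longrightarrow> (f j has_real_derivative D j) (at (\<theta> m))"
  shows "sld_qim (prod_index n) (\<lambda>\<theta> g. \<Prod>j<n. phase_state (f j) \<theta> $ g j) \<theta> m m
           = 4 / real CARD('d) * (\<Sum>j<n. (D j)\<^sup>2)"
proof -
  have "sld_qim (prod_index n) (\<lambda>\<theta> g. \<Prod>j<n. phase_state (f j) \<theta> $ g j) \<theta> m m
      = 4 * (\<Sum>j<n. Re (vinner (phase_vec (f j) \<theta> (\<lambda>a. \<i> * of_real (D j * eigval m a)))
                               (phase_vec (f j) \<theta> (\<lambda>a. \<i> * of_real (D j * eigval m a)))))"
    by (intro sld_qim_product_orthogonal_derivatives has_vector_derivative_phase_state[where \<theta>=\<theta>]
        vinner_phase_state phase_derivative_orthogonal m f)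
  then show ?thesis
    by (simp only: vinner_phase_derivative[OF m] Re_complex_of_real)
      (simp add: sum_divide_distrib sum_distrib_left)
qed

end

theorem proposition4p4:
  fixes t :: "nat \<Rightarrow> complex^'d^'d"
    and w :: "'d \<Rightarrow> complex^'d"
    and f :: "nat \<Rightarrow> real \<Rightarrow> real"
    and n :: nat
    and \<Theta> :: "real set"
    and \<theta> :: "nat \<Rightarrow> real"
  assumes herm: "\<And>k. k < CARD('d) - 1 \<Longrightarrow> adjoint_mat (t k) = t k"
    and traceless: "\<And>k. k < CARD('d) - 1 \<Longrightarrow> mtrace (t k) = 0"
    and orth: "\<And>k l. k < CARD('d) - 1 \<Longrightarrow> l < CARD('d) - 1 \<Longrightarrow>
                 mtrace (t k ** t l) = (if k = l then 1 else 0)"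
    and comm: "\<And>k l. k < CARD('d) - 1 \<Longrightarrow> l < CARD('d) - 1 \<Longrightarrow> t k ** t l = t l ** t k"
    and onb: "\<And>a b. vinner (w a) (w b) = (if a = b then 1 else 0)"
    and eig: "\<And>k a. k < CARD('d) - 1 \<Longrightarrow> \<exists>c. t k *v w a = c *s w a"
    and range_open: "open \<Theta>"
    and diff: "\<And>j x. j < n \<Longrightarrow> x \<in> \<Theta> \<Longrightarrow> f j differentiable (at x)"
    and pos: "\<And>j x. j < n \<Longrightarrow> x \<in> \<Theta> \<Longrightarrow> deriv (f j) x > 0"
    and bound: "\<And>x. x \<in> \<Theta> \<Longrightarrow> 0 \<le> (\<Sum>j<n. f j x) \<and> (\<Sum>j<n. f j x) \<le> pi"
    and theta_in: "\<And>k. k < CARD('d) - 1 \<Longrightarrow> \<theta> k \<in> \<Theta>"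
  shows "sld_qim_trace (CARD('d) - 1) (prod_index n) (scheme_i t f n w) \<theta>
           = 4 / real CARD('d) * (\<Sum>i<CARD('d) - 1. \<Sum>j<n. (deriv (f j) (\<theta> i))\<^sup>2)
       \<and> sld_qim_trace (CARD('d) - 1) UNIV (scheme_ii t f n w) \<theta>
           = 4 / real CARD('d) * (\<Sum>i<CARD('d) - 1. (\<Sum>j<n. deriv (f j) (\<theta> i))\<^sup>2)"
proof -
  interpret common_eigenbasis t w
    by unfold_locales (simp_all add: herm traceless orth onb eig)
  have f': "(f j has_real_derivative deriv (f j) (\<theta> m)) (at (\<theta> m))"
    if "j < n" "m < CARD('d) - 1" for j m
    using diff[OF that(1) theta_in[OF that(2)]] by (simp add: DERIV_deriv_iff_real_differentiable)
  have sum_f': "((\<lambda>x. \<Sum>j<n. f j x) has_real_derivative (\<Sum>j<n. deriv (f j) (\<theta> m))) (at (\<theta> m))"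
    if "m < CARD('d) - 1" for m
    using f' that by (auto intro: DERIV_sum)
  have scheme_i: "sld_qim (prod_index n) (scheme_i t f n w) \<theta> m m
      = 4 / real CARD('d) * (\<Sum>j<n. (deriv (f j) (\<theta> m))\<^sup>2)" if "m < CARD('d) - 1" for m
    unfolding scheme_i_eq by (rule sld_qim_product_phase_states[where \<theta>=\<theta>]) (use that f' in auto)
  have scheme_ii: "sld_qim UNIV (scheme_ii t f n w) \<theta> m m
      = 4 / real CARD('d) * (\<Sum>j<n. deriv (f j) (\<theta> m))\<^sup>2" if "m < CARD('d) - 1" for m
    unfolding scheme_ii_eq by (rule sld_qim_phase_state[where \<theta>=\<theta>]) (use that sum_f' in auto)
  show ?thesis
    by (simp add: sld_qim_trace_def scheme_i scheme_ii sum_distrib_left)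
qed

end
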